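(* Let $(X,d)$ be a complete doubling metric space, $G\ge0$, and let $\mathrm T=(\mathcal T,\{x_I\},\{r_I\})$ satisfy (T1), (T2), (T'3), (T4), (T5) and (M1)–(M7) with respect to $G$, with exponent $s$. Then $s$ is the unique zero of the pressure function $t\mapsto p(-tf)$, where $f(\omega)=\log(1/\rho_\omega)$ is the function from (M6).
   Context: Words: $A_N=\{0,\dots,N-1\}$ ($N\ge2$), $\Sigma_N=A_N^{\mathbb N}$, shift $\sigma(\omega_1\omega_2\dots)=\omega_2\omega_3\dots$; for a finite word $I$, $\sigma^n(I)=I_{n+1}\cdots I_{|I|}$. For $\mathcal T\subseteq\Sigma_N$, $\mathcal T^*$ is the set of finite prefixes $\omega|_k$ ($k\ge0$) of elements of $\mathcal T$, $\mathcal T_k$ those of length $k$, $[I]=\{\omega\in\mathcal T:I\prec\omega\}$; $\prec$ prefix relation; $IJ$ concatenation; incomparable words differ at some position $\le$ the shorter length. $\mathcal T\cup\mathcal T^*\subseteq\Sigma_{N+1}$ via $I\mapsto I\,N\,N\cdots$, metric $2^{-(\text{common prefix length})}$; $\operatorname{var}_ng=\sup\{|g(\omega)-g(\tau)|:\omega|_n=\tau|_n\}$; $g$ Hölder if $\sup_n\operatorname{var}_n(g)/a^n<\infty$ for some $a\in(0,1)$. $S_ng=\sum_{k<n}g\circ\sigma^k$. $f,g$ cohomologous if $f-g=h\circ\sigma-h$, $h$ continuous; $f$ lattice if cohomologous to a function valued in a proper closed subgroup of $\mathbb R$, non-lattice otherwise. Pressure of continuous $g:\mathcal T\to\mathbb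 R$: $p(g)=\lim_{n\to\infty}\frac1n\log\sum_{I\in\mathcal T_n}\exp\big(\sup_{\omega\in[I]}S_ng(\omega)\big)$. Tree conditions (constants $\rho,C,D,E>0$): (T1) $d(x_I,x_J)\ge C(r_I+r_J)$ for incomparable $I,J$; (T2) $\operatorname{diam}\{x_{IJ}:IJ\in\mathcal T^*\}\le Dr_I$; (T'3) for all $I$, $n\ge0$ and every $\mathcal I\subseteq\bigcup_{k\ge n}\mathcal T_k$ such that each $\omega\in\mathcal T$ has exactly one prefix in $\mathcal I$ and some element of $\mathcal I$ extends $I$: $\frac1Er_I^s\le\sum_{IJ\in\mathcal I}r_{IJ}^s\le Er_I^s$; (T4) $r_I\to0$ as $|I|\to\infty$; (T5) $r_{Ij}\ge\rho r_I$. Generated set $K=\{x_\omega\}$, $x_\omega=\lim_nx_{\omega|_n}$; $K_I=\{x_\omega\in K:I\prec\omega\}$; $A_r=\{x:\operatorname{dist}(x,A)\le r\}$. (M1)–(M7) w.r.t. $G\ge0$ (all words in $\mathcal T^*$): (M1) $\mathcal T=\{\omega:A_{\omega_n\omega_{n+1}}=1\ \forall n\}$, $A\in\{0,1\}^{N\times N}$ irreducible aperiodic. (M2) $\{x_I\}\subseteq K$. (M3) $r_{Ii}\le Rr_I$ for some $0<R<1$. (M4) bi-Lipschitz $\varphi_i:X\to X$ and $W,\delta_0>0$ with $\varphi_I=\varphi_{I_1}\circ\dots\circ\varphi_{I_{|I|}}$, $\varphi_\varnothing=\mathrm{id}$, $\varphi_I(K_J)=K_{IJ}$ and $(K_I)_{r_IWG\delta}\subseteq\varphi_I(K_{G\delta})$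 for $\delta\le\delta_0$. (M5) for fixed $\xi\in(0,\delta_0)$, $\kappa^\mp_{i,J}$ are the optimal constants with $\kappa^-_{i,J}\frac{r_{iJ}}{r_J}d(x,y)\le d(\varphi_ix,\varphi_iy)\le\kappa^+_{i,J}\frac{r_{iJ}}{r_J}d(x,y)$ on $\varphi_J(K_{G\xi})$, $\kappa^\pm_{I,J}=\prod_{n=1}^{|I|}\kappa^\pm_{I_n,\sigma^n(I)J}$, and $\kappa^\pm_{I,J}\to1$ as $|J|\to\infty$ uniformly in $I$. (M6) with $f_1(iJ)=\log\frac{r_J}{r_{iJ}\kappa^+_{i,J}}$, $f_2(iJ)=\log\frac{r_J}{r_{iJ}\kappa^-_{i,J}}$, $f_1(\varnothing)=f_2(\varnothing)=0$: $r_{i\omega|_n}/r_{\omega|_n}\to\rho_{i\omega}\in(0,1)$, $\omega\mapsto\rho_\omega$ continuous on $\mathcal T$, and Hölder extensions $\tilde f_1,\tilde f_2$ of $f_1,f_2$ to $\mathcal T\cup\mathcal T^*$ exist with $\tilde f_1=\tilde f_2=\log(1/\rho_\omega)=:f(\omega)$ on $\mathcal T$. (M7) $f$ is non-lattice. *)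

theory Defs
  imports "HOL-Analysis.Analysis" "HOL-Library.Sublist"
begin

text \<open>Infinite words are sequences nat => nat (index 0 is the first letter);
  finite words are lists of naturals.\<close>

type_synonym word = "nat list"
type_synonym seq = "nat \<Rightarrow> nat"

definition Sigma_N :: "nat \<Rightarrow> seq set" where
  "Sigma_N N = {\<omega>. \<forall>n. \<omega> n < N}"

definition shift :: "seq \<Rightarrow> seq" where
  "shift \<omega> = (\<lambda>n. \<omega> (Suc n))"

definition seqcons :: "nat \<Rightarrow> seq \<Rightarrow> seq" where
  "seqcons i \<omega> = case_nat i \<omega>"

definition pref :: "seq \<Rightarrow> nat \<Rightarrow> word" where
  "pref \<omega> k = map \<omega> [0..<k]"

definition words :: "seq set \<Rightarrow> word set" where
  "words T = {pref \<omega> k | \<omega> k. \<omega> \<in> T}"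

definition words_len :: "seq set \<Rightarrow> nat \<Rightarrow> word set" where
  "words_len T k = {pref \<omega> k | \<omega>. \<omega> \<in> T}"

definition cyl :: "seq set \<Rightarrow> word \<Rightarrow> seq set" where
  "cyl T I = {\<omega> \<in> T. pref \<omega> (length I) = I}"

text \<open>embedding of finite words into Sigma_{N+1}: I \<mapsto> I N N N ...\<close>
definition emb :: "nat \<Rightarrow> word \<Rightarrow> seq" where
  "emb N I = (\<lambda>n. if n < length I then I ! n else N)"

text \<open>Hoelder continuity w.r.t. the metric 2^(-common prefix length):
  var_n g <= C a^n for some 0<a<1\<close>
definition holder_on :: "seq set \<Rightarrow> (seq \<Rightarrow> real) \<Rightarrow> bool" where
  "holder_on D g \<longleftrightarrow> (\<exists>a C. 0 < a \<and> a < 1 \<and>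
     (\<forall>n. \<forall>\<omega>\<in>D. \<forall>\<tau>\<in>D. (\<forall>k<n. \<omega> k = \<tau> k) \<longrightarrow> \<bar>g \<omega> - g \<tau>\<bar> \<le> C * a ^ n))"

text \<open>continuity on T w.r.t. the metric 2^(-common prefix length)\<close>
definition cont_T :: "seq set \<Rightarrow> (seq \<Rightarrow> real) \<Rightarrow> bool" where
  "cont_T T h \<longleftrightarrow> (\<forall>\<omega>\<in>T. \<forall>e>0. \<exists>n. \<forall>\<tau>\<in>T. (\<forall>k<n. \<omega> k = \<tau> k) \<longrightarrow> \<bar>h \<tau> - h \<omega>\<bar> < e)"

fun mpow :: "nat \<Rightarrow> (nat \<Rightarrow> nat \<Rightarrow> nat) \<Rightarrow> nat \<Rightarrow> nat \<Rightarrow> nat \<Rightarrow> nat" where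
  "mpow N A 0 i j = (if i = j then 1 else 0)"
| "mpow N A (Suc k) i j = (\<Sum>l<N. mpow N A k i l * A l j)"

definition irreducible_mat :: "nat \<Rightarrow> (nat \<Rightarrow> nat \<Rightarrow> nat) \<Rightarrow> bool" where
  "irreducible_mat N A \<longleftrightarrow> (\<forall>i<N. \<forall>j<N. \<exists>k>0. mpow N A k i j > 0)"

definition aperiodic_mat :: "nat \<Rightarrow> (nat \<Rightarrow> nat \<Rightarrow> nat) \<Rightarrow> bool" where
  "aperiodic_mat N A \<longleftrightarrow> (\<forall>i<N. Gcd {k. k > 0 \<and> mpow N A k i i > 0} = 1)"

definition doubling :: "'a::metric_space set \<Rightarrow> bool" where
  "doubling X \<longleftrightarrow> (\<exists>M::nat. \<forall>x\<in>X. \<forall>r>0. \<exists>F. finite F \<and> card F \<le> M \<and> F \<subseteq> X \<and>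
      ball x r \<inter> X \<subseteq> (\<Union>y\<in>F. ball y (r / 2)))"

definition bilipschitz :: "('a::metric_space \<Rightarrow> 'a) \<Rightarrow> bool" where
  "bilipschitz g \<longleftrightarrow> (\<exists>L\<ge>1. \<forall>x y. dist x y \<le> L * dist (g x) (g y) \<and> dist (g x) (g y) \<le> L * dist x y)"

fun phiw :: "(nat \<Rightarrow> 'a \<Rightarrow> 'a) \<Rightarrow> word \<Rightarrow> 'a \<Rightarrow> 'a" where
  "phiw \<phi> [] = id"
| "phiw \<phi> (i # I) = \<phi> i \<circ> phiw \<phi> I"

definition limpt :: "(word \<Rightarrow> 'a::metric_space) \<Rightarrow> seq \<Rightarrow> 'a" where
  "limpt x \<omega> = lim (\<lambda>n. x (pref \<omega> n))"

definition Kset :: "seq set \<Rightarrow> (word \<Rightarrow> 'a::metric_space) \<Rightarrow> word \<Rightarrow> 'a set" where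
  "Kset T x I = limpt x ` cyl T I"

definition nbhd :: "'a::metric_space set \<Rightarrow> real \<Rightarrow> 'a set" where
  "nbhd A r = {y. A \<noteq> {} \<and> infdist y A \<le> r}"

definition kap_plus :: "(nat \<Rightarrow> 'a::metric_space \<Rightarrow> 'a) \<Rightarrow> (word \<Rightarrow> real) \<Rightarrow> 'a set \<Rightarrow> nat \<Rightarrow> word \<Rightarrow> real" where
  "kap_plus \<phi> r S i J = Sup {dist (\<phi> i a) (\<phi> i b) * r J / (r (i # J) * dist a b) | a b.
       a \<in> phiw \<phi> J ` S \<and> b \<in> phiw \<phi> J ` S \<and> a \<noteq> b}"

definition kap_minus :: "(nat \<Rightarrow> 'a::metric_space \<Rightarrow> 'a) \<Rightarrow> (word \<Rightarrow> real) \<Rightarrow> 'a set \<Rightarrow> nat \<Rightarrow> word \<Rightarrow> real" where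
  "kap_minus \<phi> r S i J = Inf {dist (\<phi> i a) (\<phi> i b) * r J / (r (i # J) * dist a b) | a b.
       a \<in> phiw \<phi> J ` S \<and> b \<in> phiw \<phi> J ` S \<and> a \<noteq> b}"

definition kapW :: "(nat \<Rightarrow> word \<Rightarrow> real) \<Rightarrow> word \<Rightarrow> word \<Rightarrow> real" where
  "kapW k I J = (\<Prod>n\<in>{1..length I}. k (I ! (n - 1)) (drop n I @ J))"

definition fword :: "(nat \<Rightarrow> word \<Rightarrow> real) \<Rightarrow> (word \<Rightarrow> real) \<Rightarrow> word \<Rightarrow> real" where
  "fword k r I = (case I of [] \<Rightarrow> 0 | i # J \<Rightarrow> ln (r J / (r (i # J) * k i J)))"

definition proper_closed_subgroup :: "real set \<Rightarrow> bool" where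
  "proper_closed_subgroup H \<longleftrightarrow> closed H \<and> 0 \<in> H \<and> (\<forall>a\<in>H. \<forall>b\<in>H. a - b \<in> H) \<and> H \<noteq> UNIV"

definition lattice_fun :: "seq set \<Rightarrow> (seq \<Rightarrow> real) \<Rightarrow> bool" where
  "lattice_fun T f \<longleftrightarrow> (\<exists>h g H. cont_T T h \<and> proper_closed_subgroup H \<and>
      (\<forall>\<omega>\<in>T. g \<omega> \<in> H \<and> f \<omega> - g \<omega> = h (shift \<omega>) - h \<omega>))"

definition birkhoff :: "(seq \<Rightarrow> real) \<Rightarrow> nat \<Rightarrow> seq \<Rightarrow> real" where
  "birkhoff g n \<omega> = (\<Sum>k<n. g ((shift ^^ k) \<omega>))"

definition pressure :: "seq set \<Rightarrow> (seq \<Rightarrow> real) \<Rightarrow> real" where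
  "pressure T g = lim (\<lambda>n. ln (\<Sum>I\<in>words_len T n. exp (SUP \<omega>\<in>cyl T I. birkhoff g n \<omega>)) / real n)"

end

theory Submission
  imports Defs
begin

text \<open>Write \<open>Z\<^sub>n(t)\<close> for the partition sum of \<open>-t f\<close>. The Hoelder extension of \<open>f\<^sub>1\<close>
  together with \<open>\<kappa>\<^sup>+ \<rightarrow> 1\<close> makes \<open>r(\<omega>|j+1) / r((\<sigma> \<omega>)|j)\<close> converge to \<open>exp (- f \<omega>)\<close>
  uniformly, and telescoping gives \<open>r(\<omega>|n) / r(\<emptyset>) = exp (- S\<^sub>n f \<omega> + o(n))\<close> uniformly in \<open>\<omega>\<close>.
  Hence \<open>Z\<^sub>n(t)\<close> agrees with the sum of \<open>(r\<^sub>I / r(\<emptyset>))\<^sup>t\<close> over the words of length \<open>n\<close> up to a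
  factor \<open>exp (o(n))\<close>. Condition (T'3) at level \<open>n\<close> keeps this sum between \<open>1/E\<close> and \<open>E\<close> for
  \<open>t = s\<close>, and \<open>r\<^sub>I \<le> R\<^sup>|\<^sup>I\<^sup>| r(\<emptyset>)\<close> then gives \<open>p(-t f) \<le> (t - s) log R\<close> for \<open>t \<ge> s\<close> and the reverse
  inequality for \<open>t \<le> s\<close>. The pressure limit exists by Fekete's lemma, since \<open>log Z\<^sub>n\<close> is
  subadditive.\<close>

lemma pref_length [simp]: "length (pref \<omega> k) = k"
  by (simp add: pref_def)

lemma pref_nth [simp]: "k < n \<Longrightarrow> pref \<omega> n ! k = \<omega> k"
  by (simp add: pref_def)

lemma pref_0 [simp]: "pref \<omega> 0 = []"
  by (simp add: pref_def)

lemma pref_Suc: "pref \<omega> (Suc n) = \<omega> 0 # pref (shift \<omega>) n"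
  by (rule nth_equalityI) (auto simp: shift_def nth_Cons split: nat.split)

lemma funpow_shift_apply: "(shift ^^ n) \<omega> k = \<omega> (n + k)"
  by (induction n arbitrary: \<omega>) (auto simp: shift_def funpow_Suc_right simp del: funpow.simps)

lemma take_pref: "n \<le> m \<Longrightarrow> take n (pref \<omega> m) = pref \<omega> n"
  by (rule nth_equalityI) auto

lemma drop_pref: "drop n (pref \<omega> (n + m)) = pref ((shift ^^ n) \<omega>) m"
  by (rule nth_equalityI) (auto simp: funpow_shift_apply)

lemma emb_pref_agree: "k < n \<Longrightarrow> emb N (pref \<omega> n) k = \<omega> k"
  by (simp add: emb_def)

lemma pref_in_words: "\<omega> \<in> T \<Longrightarrow> pref \<omega> n \<in> words T"
  unfolding words_def by blast

lemma pref_in_words_len: "\<omega> \<in> T \<Longrightarrow> pref \<omega> n \<in> words_len T n"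
  unfolding words_len_def by blast

lemma words_len_subset_words: "words_len T n \<subseteq> words T"
  unfolding words_len_def words_def by blast

lemma length_words_len: "I \<in> words_len T n \<Longrightarrow> length I = n"
  unfolding words_len_def by auto

lemma words_butlast: "I @ [j] \<in> words T \<Longrightarrow> I \<in> words T"
proof -
  assume "I @ [j] \<in> words T"
  then obtain \<omega> k where \<omega>: "\<omega> \<in> T" "I @ [j] = pref \<omega> k"
    unfolding words_def by blast
  then have "I = take (length I) (pref \<omega> k)"
    by (metis append_eq_conv_conj)
  also have "\<dots> = pref \<omega> (length I)"
    using \<omega>(2) by (intro take_pref) (metis le_add1 length_append pref_length)
  finally show ?thesis
    using \<omega>(1) pref_in_words by metis
qed

lemma pref_in_cyl: "\<omega> \<in> T \<Longrightarrow> \<omega> \<in> cyl T (pref \<omega> n)"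
  unfolding cyl_def by simp

lemma cyl_subset: "cyl T I \<subseteq> T"
  unfolding cyl_def by blast

lemma pref_eq_of_cyl: "I \<in> words_len T n \<Longrightarrow> \<omega> \<in> cyl T I \<Longrightarrow> pref \<omega> n = I"
  unfolding cyl_def using length_words_len by fastforce

lemma cyl_nonempty: "I \<in> words_len T n \<Longrightarrow> cyl T I \<noteq> {}"
  unfolding words_len_def cyl_def by auto

lemma birkhoff_add: "birkhoff g (n + m) \<omega> = birkhoff g n \<omega> + birkhoff g m ((shift ^^ n) \<omega>)"
  by (induction m) (simp_all add: birkhoff_def, metis add.commute comp_apply funpow_add)

lemma birkhoff_scale: "birkhoff (\<lambda>\<omega>. c * g \<omega>) n \<omega> = c * birkhoff g n \<omega>"
  unfolding birkhoff_def by (simp add: sum_distrib_left)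

lemma subadditive_le_multiple:
  fixes a :: "nat \<Rightarrow> real"
  assumes sub: "\<And>n m. a (n + m) \<le> a n + a m"
  shows "a (q * k + j) \<le> real q * a k + a j"
proof (induction q)
  case (Suc q)
  have "a (Suc q * k + j) \<le> a k + a (q * k + j)"
    using sub[of k "q * k + j"] by (simp add: add.assoc)
  with Suc show ?case by (simp add: algebra_simps)
qed simp

lemma subadditive_le_linear:
  fixes a :: "nat \<Rightarrow> real"
  assumes sub: "\<And>n m. a (n + m) \<le> a n + a m" and k: "k \<ge> 1"
  shows "a n \<le> real n * (a k / real k) + (\<bar>a k\<bar> + (\<Sum>j<k. \<bar>a j\<bar>))"
proof -
  define q j where "q = n div k" and "j = n mod k"
  have n: "n = q * k + j" and j: "j < k"
    using k by (simp_all add: q_def j_def)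
  have "a j \<le> (\<Sum>j<k. \<bar>a j\<bar>)"
    using member_le_sum[of j "{..<k}" "\<lambda>j. \<bar>a j\<bar>"] j by fastforce
  moreover have "- \<bar>a k\<bar> \<le> real j * (a k / real k)"
  proof -
    have "\<bar>real j * (a k / real k)\<bar> = (real j / real k) * \<bar>a k\<bar>"
      by (simp add: abs_mult)
    also have "\<dots> \<le> \<bar>a k\<bar>"
      using j mult_right_mono[of "real j / real k" 1 "\<bar>a k\<bar>"] by simp
    finally show ?thesis
      using abs_le_D2 by fastforce
  qed
  moreover have "real n * (a k / real k) = real q * a k + real j * (a k / real k)"
    using k by (simp add: n field_simps)
  moreover have "a n \<le> real q * a k + a j"
    using subadditive_le_multiple[OF sub, of q k j] by (simp add: n)
  ultimately show ?thesis
    by linarith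
qed

lemma subadditive_div_convergent:
  fixes a :: "nat \<Rightarrow> real"
  assumes sub: "\<And>n m. a (n + m) \<le> a n + a m" and low: "\<And>n. c * real n \<le> a n"
  shows "convergent (\<lambda>n. a n / real n)"
proof -
  define S where "S = (\<lambda>n. a n / real n) ` {1..}"
  have "bdd_below S"
    unfolding S_def bdd_below_def using low by (auto intro!: exI[of _ c] simp: field_simps)
  then have L_le: "Inf S \<le> a n / real n" if "n \<ge> 1" for n
    using that by (intro cInf_lower) (auto simp: S_def)
  have "(\<lambda>n. a n / real n) \<longlonglongrightarrow> Inf S"
  proof (rule LIMSEQ_I)
    fix e :: real assume e: "e > 0"
    obtain k where k: "k \<ge> 1" "a k / real k < Inf S + e / 2"
      using cInf_lessD[of S "Inf S + e / 2"] e unfolding S_def by auto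
    define C where "C = \<bar>a k\<bar> + (\<Sum>j<k. \<bar>a j\<bar>)"
    obtain n0 where n0: "real n0 > 2 * C / e"
      using reals_Archimedean2 by blast
    have "norm (a n / real n - Inf S) < e" if n: "n \<ge> n0 + 1" for n
    proof -
      have "2 * C / e < real n"
        using n0 n by linarith
      then have "C / real n < e / 2"
        using n e by (simp add: field_simps)
      moreover have "a n / real n \<le> (real n * (a k / real k) + C) / real n"
        using subadditive_le_linear[OF sub k(1), of n] unfolding C_def[symmetric]
        by (rule divide_right_mono) simp
      moreover have "(real n * (a k / real k) + C) / real n = a k / real k + C / real n"
        using n by (simp add: add_divide_distrib)
      ultimately have "a n / real n - Inf S < e"
        using k(2) by linarith
      moreover have "0 \<le> a n / real n - Inf S"
        using L_le[of n] n by simp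
      ultimately show ?thesis
        by simp
    qed
    then show "\<exists>n0. \<forall>n\<ge>n0. norm (a n / real n - Inf S) < e"
      by blast
  qed
  then show ?thesis
    unfolding convergent_def by blast
qed

lemma lim_le_of_le_plus_null:
  fixes X e :: "nat \<Rightarrow> real"
  assumes X: "X \<longlonglongrightarrow> l" and e: "e \<longlonglongrightarrow> 0"
    and bound: "\<And>n. n \<ge> 1 \<Longrightarrow> X n - e n \<le> a + K / real n"
  shows "l \<le> a"
proof -
  have "(\<lambda>n. a + K / real n) \<longlonglongrightarrow> a + 0"
    by (intro tendsto_add tendsto_const lim_const_over_n)
  moreover have "(\<lambda>n. X n - e n) \<longlonglongrightarrow> l - 0"
    using X e by (rule tendsto_diff)
  moreover have "eventually (\<lambda>n. X n - e n \<le> a + K / real n) sequentially"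
    using bound unfolding eventually_sequentially by blast
  ultimately have "l - 0 \<le> a + 0"
    by (rule tendsto_le[OF trivial_limit_sequentially])
  then show ?thesis
    by simp
qed

lemma lim_ge_of_ge_plus_null:
  fixes X e :: "nat \<Rightarrow> real"
  assumes X: "X \<longlonglongrightarrow> l" and e: "e \<longlonglongrightarrow> 0"
    and bound: "\<And>n. n \<ge> 1 \<Longrightarrow> a - K / real n \<le> X n - e n"
  shows "a \<le> l"
proof -
  have "- l \<le> - a"
  proof (rule lim_le_of_le_plus_null)
    show "(\<lambda>n. - X n) \<longlonglongrightarrow> - l"
      using X by (rule tendsto_minus)
    show "(\<lambda>n. - e n) \<longlonglongrightarrow> 0"
      using tendsto_minus[OF e] by simp
    show "- X n - - e n \<le> - a + K / real n" if "n \<ge> 1" for n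
      using bound[OF that] by linarith
  qed
  then show ?thesis
    by simp
qed

lemma abs_ln_diff_le:
  fixes A B :: real
  assumes "0 < B" "A \<le> exp \<delta> * B" "exp (- \<delta>) * B \<le> A"
  shows "\<bar>ln A - ln B\<bar> \<le> \<delta>"
proof -
  have A: "0 < A"
    using assms(1,3) by (meson exp_gt_zero mult_pos_pos order_less_le_trans)
  have "ln A \<le> ln (exp \<delta> * B)"
    using assms(1,2) A by (subst ln_le_cancel_iff) auto
  moreover have "ln (exp (- \<delta>) * B) \<le> ln A"
    using assms(1,3) A by (subst ln_le_cancel_iff) auto
  ultimately show ?thesis
    using assms(1) by (simp add: ln_mult abs_diff_le_iff)
qed

locale shift_space =
  fixes T :: "seq set" and N :: nat
  assumes subset_Sigma_N: "T \<subseteq> Sigma_N N"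
    and shift_in: "\<And>\<omega>. \<omega> \<in> T \<Longrightarrow> shift \<omega> \<in> T"
    and nonempty: "T \<noteq> {}"
begin

lemma funpow_shift_in: "\<omega> \<in> T \<Longrightarrow> (shift ^^ k) \<omega> \<in> T"
  by (induction k) (simp_all add: shift_in)

lemma finite_words_len: "finite (words_len T n)"
proof (rule finite_subset)
  show "words_len T n \<subseteq> {xs. set xs \<subseteq> {..<N} \<and> length xs = n}"
    using subset_Sigma_N unfolding words_len_def Sigma_N_def pref_def by fastforce
qed (rule finite_lists_length_eq, simp)

lemma words_len_nonempty: "words_len T n \<noteq> {}"
  using nonempty pref_in_words_len by blast

lemma Nil_in_words: "[] \<in> words T"
  using nonempty pref_in_words[of _ T 0] by auto

lemma unique_pref_in_words_len:
  assumes "\<omega> \<in> T"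
  shows "\<exists>!J. J \<in> words_len T n \<and> pref \<omega> (length J) = J"
  using assms length_words_len pref_in_words_len by (intro ex1I[of _ "pref \<omega> n"]) fastforce+

lemma birkhoff_abs_le:
  assumes "\<forall>\<omega>\<in>T. \<bar>g \<omega>\<bar> \<le> B" "\<omega> \<in> T"
  shows "\<bar>birkhoff g n \<omega>\<bar> \<le> real n * B"
proof -
  have "\<bar>birkhoff g n \<omega>\<bar> \<le> (\<Sum>k<n. \<bar>g ((shift ^^ k) \<omega>)\<bar>)"
    unfolding birkhoff_def by (rule sum_abs)
  also have "\<dots> \<le> (\<Sum>k<n. B)"
    using assms funpow_shift_in by (intro sum_mono) blast
  finally show ?thesis
    by simp
qed

definition partition_sum :: "(seq \<Rightarrow> real) \<Rightarrow> nat \<Rightarrow> real" where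
  "partition_sum g n = (\<Sum>I\<in>words_len T n. exp (SUP \<omega>\<in>cyl T I. birkhoff g n \<omega>))"

lemma pressure_eq_lim: "pressure T g = lim (\<lambda>n. ln (partition_sum g n) / real n)"
  unfolding pressure_def partition_sum_def ..

lemma ln_partition_sum_approx:
  assumes approx: "\<And>I \<omega>. I \<in> words_len T n \<Longrightarrow> \<omega> \<in> cyl T I \<Longrightarrow> \<bar>birkhoff g n \<omega> - u I\<bar> \<le> \<delta>"
  shows "\<bar>ln (partition_sum g n) - ln (\<Sum>I\<in>words_len T n. exp (u I))\<bar> \<le> \<delta>"
proof (rule abs_ln_diff_le)
  have SUP_approx: "u I - \<delta> \<le> (SUP \<omega>\<in>cyl T I. birkhoff g n \<omega>) \<and> (SUP \<omega>\<in>cyl T I. birkhoff g n \<omega>) \<le> u I + \<delta>"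
    if I: "I \<in> words_len T n" for I
  proof
    obtain \<omega>0 where \<omega>0: "\<omega>0 \<in> cyl T I"
      using cyl_nonempty[OF I] by blast
    have "bdd_above ((\<lambda>\<omega>. birkhoff g n \<omega>) ` cyl T I)"
      using approx[OF I] by (intro bdd_aboveI2[of _ _ "u I + \<delta>"]) (simp add: abs_diff_le_iff)
    then have "birkhoff g n \<omega>0 \<le> (SUP \<omega>\<in>cyl T I. birkhoff g n \<omega>)"
      using \<omega>0 by (rule cSUP_upper2) simp
    then show "u I - \<delta> \<le> (SUP \<omega>\<in>cyl T I. birkhoff g n \<omega>)"
      using approx[OF I \<omega>0] by linarith
    show "(SUP \<omega>\<in>cyl T I. birkhoff g n \<omega>) \<le> u I + \<delta>"
      using cyl_nonempty[OF I] approx[OF I] by (intro cSUP_least) (auto simp: abs_diff_le_iff)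
  qed
  show "partition_sum g n \<le> exp \<delta> * (\<Sum>I\<in>words_len T n. exp (u I))"
    unfolding partition_sum_def sum_distrib_left
    using SUP_approx by (intro sum_mono) (simp add: mult_exp_exp add.commute)
  show "exp (- \<delta>) * (\<Sum>I\<in>words_len T n. exp (u I)) \<le> partition_sum g n"
    unfolding partition_sum_def sum_distrib_left
    using SUP_approx by (intro sum_mono) (simp add: mult_exp_exp)
  show "0 < (\<Sum>I\<in>words_len T n. exp (u I))"
    using finite_words_len words_len_nonempty by (intro sum_pos) auto
qed

lemma partition_sum_pos: "0 < partition_sum g n"
  unfolding partition_sum_def using finite_words_len words_len_nonempty by (intro sum_pos) auto

lemma ln_partition_sum_ge:
  assumes "\<forall>\<omega>\<in>T. \<bar>g \<omega>\<bar> \<le> B"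
  shows "- (real n * B) \<le> ln (partition_sum g n)"
proof -
  have "\<bar>ln (partition_sum g n) - ln (\<Sum>I\<in>words_len T n. exp 0)\<bar> \<le> real n * B"
    by (intro ln_partition_sum_approx) (simp add: birkhoff_abs_le[OF assms] subsetD[OF cyl_subset])
  moreover have "0 \<le> ln (\<Sum>I\<in>words_len T n. exp (0::real))"
    using finite_words_len words_len_nonempty by (simp add: ln_ge_zero_iff Suc_le_eq card_gt_0_iff)
  ultimately show ?thesis
    by (simp only: abs_diff_le_iff) linarith
qed

lemma partition_sum_add_le:
  assumes bounded: "\<forall>\<omega>\<in>T. \<bar>g \<omega>\<bar> \<le> B"
  shows "partition_sum g (n + m) \<le> partition_sum g n * partition_sum g m"
proof -
  define V where "V k I = (SUP \<omega>\<in>cyl T I. birkhoff g k \<omega>)" for k I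
  define F where "F p = exp (V n (fst p)) * exp (V m (snd p))" for p
  define split where "split I = (take n I, drop n I)" for I :: word
  have bdd: "bdd_above ((\<lambda>\<omega>. birkhoff g k \<omega>) ` cyl T I)" for k I
    using birkhoff_abs_le[OF bounded] cyl_subset
    by (intro bdd_aboveI2[of _ _ "real k * B"]) (force simp: abs_le_iff)
  have split_in: "split I \<in> words_len T n \<times> words_len T m" if "I \<in> words_len T (n + m)" for I
    using that funpow_shift_in pref_in_words_len
    unfolding words_len_def split_def by (force simp: take_pref drop_pref)
  have V_le: "exp (V (n + m) I) \<le> F (split I)" if I: "I \<in> words_len T (n + m)" for I
  proof -
    have "V (n + m) I \<le> V n (take n I) + V m (drop n I)"
      unfolding V_def
    proof (rule cSUP_least[OF cyl_nonempty[OF I]])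
      fix \<omega> assume \<omega>: "\<omega> \<in> cyl T I"
      then have \<omega>T: "\<omega> \<in> T" and pI: "pref \<omega> (n + m) = I"
        using cyl_subset pref_eq_of_cyl[OF I] by auto
      have "birkhoff g n \<omega> \<le> (SUP \<omega>\<in>cyl T (take n I). birkhoff g n \<omega>)"
        unfolding pI[symmetric] take_pref[OF le_add1] by (intro cSUP_upper pref_in_cyl \<omega>T bdd)
      moreover have "birkhoff g m ((shift ^^ n) \<omega>) \<le> (SUP \<omega>\<in>cyl T (drop n I). birkhoff g m \<omega>)"
        unfolding pI[symmetric] drop_pref by (intro cSUP_upper pref_in_cyl funpow_shift_in \<omega>T bdd)
      ultimately show "birkhoff g (n + m) \<omega> \<le>
          (SUP \<omega>\<in>cyl T (take n I). birkhoff g n \<omega>) + (SUP \<omega>\<in>cyl T (drop n I). birkhoff g m \<omega>)"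
        unfolding birkhoff_add by linarith
    qed
    then show ?thesis
      unfolding F_def split_def by (simp flip: exp_add)
  qed
  have "inj_on split (words_len T (n + m))"
    unfolding split_def by (rule inj_onI) (metis append_take_drop_id prod.inject)
  then have "partition_sum g (n + m) \<le> (\<Sum>p\<in>split ` words_len T (n + m). F p)"
    unfolding partition_sum_def V_def[symmetric] using V_le by (simp add: sum.reindex sum_mono)
  also have "\<dots> \<le> (\<Sum>p\<in>words_len T n \<times> words_len T m. F p)"
    using split_in finite_words_len by (intro sum_mono2 image_subsetI) (auto simp: F_def)
  also have "\<dots> = partition_sum g n * partition_sum g m"
    unfolding partition_sum_def F_def V_def sum_product sum.cartesian_product by (simp add: case_prod_beta)
  finally show ?thesis .
qed

lemma pressure_convergent:
  assumes bounded: "\<forall>\<omega>\<in>T. \<bar>g \<omega>\<bar> \<le> B"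
  shows "convergent (\<lambda>n. ln (partition_sum g n) / real n)"
proof (rule subadditive_div_convergent)
  show "ln (partition_sum g (n + m)) \<le> ln (partition_sum g n) + ln (partition_sum g m)" for n m
  proof -
    have "ln (partition_sum g (n + m)) \<le> ln (partition_sum g n * partition_sum g m)"
      using partition_sum_add_le[OF bounded] partition_sum_pos
      by (subst ln_le_cancel_iff) (auto intro: mult_pos_pos)
    then show ?thesis
      using partition_sum_pos[of g n] partition_sum_pos[of g m] by (simp add: ln_mult)
  qed
  show "- B * real n \<le> ln (partition_sum g n)" for n
    using ln_partition_sum_ge[OF bounded, of n] by (metis mult.commute mult_minus_left)
qed

end

locale contracting_tree = shift_space +
  fixes r :: "word \<Rightarrow> real" and \<rho>0 R :: real and f :: "seq \<Rightarrow> real"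
  assumes r_pos: "\<And>I. I \<in> words T \<Longrightarrow> 0 < r I"
    and r_snoc_ge: "\<And>I j. I @ [j] \<in> words T \<Longrightarrow> \<rho>0 * r I \<le> r (I @ [j])"
    and r_snoc_le: "\<And>I j. I @ [j] \<in> words T \<Longrightarrow> r (I @ [j]) \<le> R * r I"
    and \<rho>0_pos: "0 < \<rho>0" and R_pos: "0 < R" and R_less_1: "R < 1"
    and ratio_defect_uniform: "\<And>\<epsilon>. 0 < \<epsilon> \<Longrightarrow> \<exists>L. \<forall>\<omega>\<in>T. \<forall>j\<ge>L.
           \<bar>ln (r (pref \<omega> (Suc j))) - ln (r (pref (shift \<omega>) j)) + f \<omega>\<bar> \<le> \<epsilon>"
begin

definition ratio_defect :: "seq \<Rightarrow> nat \<Rightarrow> real" where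
  "ratio_defect \<omega> j = ln (r (pref \<omega> (Suc j))) - ln (r (pref (shift \<omega>) j)) + f \<omega>"

lemma r_bounds: "I \<in> words T \<Longrightarrow> \<rho>0 ^ length I * r [] \<le> r I \<and> r I \<le> R ^ length I * r []"
proof (induction I rule: rev_induct)
  case (snoc j I)
  then have IH: "\<rho>0 ^ length I * r [] \<le> r I" "r I \<le> R ^ length I * r []"
    using words_butlast by blast+
  have "\<rho>0 ^ length (I @ [j]) * r [] = \<rho>0 * (\<rho>0 ^ length I * r [])"
    by simp
  also have "\<dots> \<le> \<rho>0 * r I"
    using IH(1) \<rho>0_pos by (intro mult_left_mono) auto
  also have "\<dots> \<le> r (I @ [j])"
    using snoc.prems by (rule r_snoc_ge)
  finally have lower: "\<rho>0 ^ length (I @ [j]) * r [] \<le> r (I @ [j])" .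
  have "r (I @ [j]) \<le> R * r I"
    using snoc.prems by (rule r_snoc_le)
  also have "\<dots> \<le> R * (R ^ length I * r [])"
    using IH(2) R_pos by (intro mult_left_mono) auto
  also have "\<dots> = R ^ length (I @ [j]) * r []"
    by simp
  finally show ?case
    using lower by blast
qed simp

lemma abs_ln_r_diff_le:
  assumes I: "I \<in> words T"
  shows "\<bar>ln (r I) - ln (r [])\<bar> \<le> real (length I) * \<bar>ln \<rho>0\<bar>"
proof -
  have r: "0 < r []" "0 < r I"
    using r_pos Nil_in_words I by auto
  have "ln (\<rho>0 ^ length I * r []) \<le> ln (r I)"
    using r_bounds[OF I] r \<rho>0_pos by (subst ln_le_cancel_iff) auto
  then have lower: "real (length I) * ln \<rho>0 \<le> ln (r I) - ln (r [])"
    using r \<rho>0_pos by (simp add: ln_mult ln_realpow)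
  have "R ^ length I \<le> 1"
    using R_pos R_less_1 by (intro power_le_one) auto
  then have "R ^ length I * r [] \<le> r []"
    using r(1) R_pos by (intro mult_left_le_one_le) auto
  then have "r I \<le> r []"
    using r_bounds[OF I] by linarith
  then have upper: "ln (r I) \<le> ln (r [])"
    using r by simp
  have "real (length I) * (- \<bar>ln \<rho>0\<bar>) \<le> real (length I) * ln \<rho>0"
    by (intro mult_left_mono) auto
  then show ?thesis
    unfolding abs_le_iff using lower upper by (simp add: mult_nonneg_nonneg)
qed

lemma abs_ln_r_pref_ratio_le:
  assumes "\<omega> \<in> T"
  shows "\<bar>ln (r (pref \<omega> (Suc j))) - ln (r (pref (shift \<omega>) j))\<bar> \<le> real (2 * j + 1) * \<bar>ln \<rho>0\<bar>"
proof -
  have "\<bar>ln (r (pref \<omega> (Suc j))) - ln (r (pref (shift \<omega>) j))\<bar>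
      \<le> \<bar>ln (r (pref \<omega> (Suc j))) - ln (r [])\<bar> + \<bar>ln (r (pref (shift \<omega>) j)) - ln (r [])\<bar>"
    using abs_triangle_ineq4[of "ln (r (pref \<omega> (Suc j))) - ln (r [])" "ln (r (pref (shift \<omega>) j)) - ln (r [])"]
    by simp
  also have "\<dots> \<le> real (Suc j) * \<bar>ln \<rho>0\<bar> + real j * \<bar>ln \<rho>0\<bar>"
    using abs_ln_r_diff_le[OF pref_in_words[OF assms, of "Suc j"]]
      abs_ln_r_diff_le[OF pref_in_words[OF shift_in[OF assms], of j]]
    by (intro add_mono) simp_all
  finally show ?thesis
    by (simp add: algebra_simps)
qed

lemma f_bounded: obtains B where "\<forall>\<omega>\<in>T. \<bar>f \<omega>\<bar> \<le> B"
proof -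
  obtain L where L: "\<forall>\<omega>\<in>T. \<bar>ratio_defect \<omega> L\<bar> \<le> 1"
    using ratio_defect_uniform[of 1] unfolding ratio_defect_def by auto
  have "\<bar>f \<omega>\<bar> \<le> 1 + real (2 * L + 1) * \<bar>ln \<rho>0\<bar>" if "\<omega> \<in> T" for \<omega>
  proof -
    have "f \<omega> = ratio_defect \<omega> L - (ln (r (pref \<omega> (Suc L))) - ln (r (pref (shift \<omega>) L)))"
      by (simp add: ratio_defect_def)
    then have "\<bar>f \<omega>\<bar> \<le> \<bar>ratio_defect \<omega> L\<bar> + \<bar>ln (r (pref \<omega> (Suc L))) - ln (r (pref (shift \<omega>) L))\<bar>"
      by (metis abs_triangle_ineq4)
    then show ?thesis
      using L abs_ln_r_pref_ratio_le[OF that, of L] that by fastforce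
  qed
  then show ?thesis
    using that by blast
qed

lemma ratio_defect_bounded: obtains B where "0 \<le> B" "\<forall>\<omega>\<in>T. \<forall>j<L. \<bar>ratio_defect \<omega> j\<bar> \<le> B"
proof -
  obtain B where B: "\<forall>\<omega>\<in>T. \<bar>f \<omega>\<bar> \<le> B"
    using f_bounded by blast
  have "\<bar>ratio_defect \<omega> j\<bar> \<le> real (2 * L + 1) * \<bar>ln \<rho>0\<bar> + \<bar>B\<bar>" if "\<omega> \<in> T" "j < L" for \<omega> j
  proof -
    have "\<bar>ratio_defect \<omega> j\<bar> \<le> \<bar>ln (r (pref \<omega> (Suc j))) - ln (r (pref (shift \<omega>) j))\<bar> + \<bar>f \<omega>\<bar>"
      unfolding ratio_defect_def by (rule abs_triangle_ineq)
    moreover have "real (2 * j + 1) * \<bar>ln \<rho>0\<bar> \<le> real (2 * L + 1) * \<bar>ln \<rho>0\<bar>"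
      using that(2) by (intro mult_right_mono) auto
    ultimately show ?thesis
      using abs_ln_r_pref_ratio_le[OF that(1), of j] B that(1) by fastforce
  qed
  then show ?thesis
    using that[of "real (2 * L + 1) * \<bar>ln \<rho>0\<bar> + \<bar>B\<bar>"] by force
qed

lemma ln_r_pref_plus_birkhoff:
  "ln (r (pref \<omega> n)) - ln (r []) + birkhoff f n \<omega> = (\<Sum>k<n. ratio_defect ((shift ^^ k) \<omega>) (n - Suc k))"
proof (induction n arbitrary: \<omega>)
  case (Suc n)
  have "birkhoff f (Suc n) \<omega> = f \<omega> + birkhoff f n (shift \<omega>)"
    unfolding birkhoff_def sum.lessThan_Suc_shift by (simp add: funpow_Suc_right del: funpow.simps)
  moreover have "(\<Sum>k<Suc n. ratio_defect ((shift ^^ k) \<omega>) (Suc n - Suc k))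
      = ratio_defect \<omega> n + (\<Sum>k<n. ratio_defect ((shift ^^ k) (shift \<omega>)) (n - Suc k))"
    unfolding sum.lessThan_Suc_shift by (simp add: funpow_Suc_right del: funpow.simps)
  ultimately show ?case
    using Suc[of "shift \<omega>"] unfolding ratio_defect_def by simp
qed (simp add: birkhoff_def)

lemma birkhoff_approx_ln_r:
  assumes "0 < \<epsilon>"
  obtains M where "\<forall>\<omega>\<in>T. \<forall>n. \<bar>ln (r (pref \<omega> n)) - ln (r []) + birkhoff f n \<omega>\<bar> \<le> real n * \<epsilon> + M"
proof -
  obtain L where L: "\<forall>\<omega>\<in>T. \<forall>j\<ge>L. \<bar>ratio_defect \<omega> j\<bar> \<le> \<epsilon>"
    using ratio_defect_uniform[OF assms] unfolding ratio_defect_def by blast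
  obtain B where B: "0 \<le> B" "\<forall>\<omega>\<in>T. \<forall>j<L. \<bar>ratio_defect \<omega> j\<bar> \<le> B"
    using ratio_defect_bounded by blast
  have defect_le: "\<bar>ratio_defect \<omega> j\<bar> \<le> \<epsilon> + (if j < L then B else 0)" if "\<omega> \<in> T" for \<omega> j
  proof (cases "j < L")
    case True
    then show ?thesis
      using B that assms by fastforce
  next
    case False
    then show ?thesis
      using L that by simp
  qed
  have "\<bar>ln (r (pref \<omega> n)) - ln (r []) + birkhoff f n \<omega>\<bar> \<le> real n * \<epsilon> + real L * B"
    if \<omega>: "\<omega> \<in> T" for \<omega> n
  proof -
    have "\<bar>ln (r (pref \<omega> n)) - ln (r []) + birkhoff f n \<omega>\<bar>
        \<le> (\<Sum>k<n. \<bar>ratio_defect ((shift ^^ k) \<omega>) (n - Suc k)\<bar>)"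
      unfolding ln_r_pref_plus_birkhoff by (rule sum_abs)
    also have "\<dots> \<le> (\<Sum>k<n. \<epsilon> + (if n - Suc k < L then B else 0))"
      by (intro sum_mono defect_le funpow_shift_in \<omega>)
    also have "\<dots> = real n * \<epsilon> + (\<Sum>j<n. if j < L then B else 0)"
      by (simp add: sum.distrib sum.nat_diff_reindex[where g = "\<lambda>j. if j < L then B else 0"])
    also have "(\<Sum>j<n. if j < L then B else 0) = real (min n L) * B"
      by (induction n) (auto simp: min_def algebra_simps)
    also have "\<dots> \<le> real L * B"
      using B(1) by (intro mult_right_mono) auto
    finally show ?thesis
      by simp
  qed
  then show ?thesis
    using that by blast
qed

definition rsum :: "real \<Rightarrow> nat \<Rightarrow> real" where
  "rsum t n = (\<Sum>I\<in>words_len T n. (r I / r []) powr t)"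

lemma abs_ln_partition_sum_rsum_le:
  assumes "0 < \<epsilon>"
  obtains M where "\<forall>n. \<bar>ln (partition_sum (\<lambda>\<omega>. - t * f \<omega>) n) - ln (rsum t n)\<bar> \<le> \<bar>t\<bar> * (real n * \<epsilon> + M)"
proof -
  obtain M where M: "\<forall>\<omega>\<in>T. \<forall>n. \<bar>ln (r (pref \<omega> n)) - ln (r []) + birkhoff f n \<omega>\<bar> \<le> real n * \<epsilon> + M"
    using birkhoff_approx_ln_r[OF assms] by blast
  have "\<bar>ln (partition_sum (\<lambda>\<omega>. - t * f \<omega>) n) - ln (rsum t n)\<bar> \<le> \<bar>t\<bar> * (real n * \<epsilon> + M)" for n
  proof -
    have r: "0 < r []" "\<And>I. I \<in> words_len T n \<Longrightarrow> 0 < r I"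
      using r_pos Nil_in_words words_len_subset_words by auto
    have "\<bar>birkhoff (\<lambda>\<omega>. - t * f \<omega>) n \<omega> - t * ln (r I / r [])\<bar> \<le> \<bar>t\<bar> * (real n * \<epsilon> + M)"
      if I: "I \<in> words_len T n" and \<omega>: "\<omega> \<in> cyl T I" for I \<omega>
    proof -
      have "birkhoff (\<lambda>\<omega>. - t * f \<omega>) n \<omega> - t * ln (r I / r [])
          = - t * (ln (r (pref \<omega> n)) - ln (r []) + birkhoff f n \<omega>)"
        unfolding birkhoff_scale using r(1) r(2)[OF I] pref_eq_of_cyl[OF I \<omega>]
        by (simp add: ln_div algebra_simps)
      moreover have "\<omega> \<in> T"
        using \<omega> cyl_subset by blast
      ultimately show ?thesis
        using mult_left_mono[OF M[rule_format, of \<omega> n], of "\<bar>t\<bar>"] by (simp add: abs_mult)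
    qed
    then have "\<bar>ln (partition_sum (\<lambda>\<omega>. - t * f \<omega>) n)
        - ln (\<Sum>I\<in>words_len T n. exp (t * ln (r I / r [])))\<bar> \<le> \<bar>t\<bar> * (real n * \<epsilon> + M)"
      by (rule ln_partition_sum_approx)
    moreover have "(\<Sum>I\<in>words_len T n. exp (t * ln (r I / r []))) = rsum t n"
      unfolding rsum_def using r by (intro sum.cong) (auto simp: powr_def dest: r(2))
    ultimately show ?thesis
      by simp
  qed
  then show ?thesis
    using that by blast
qed

lemma ln_partition_sum_rsum_null:
  "(\<lambda>n. (ln (partition_sum (\<lambda>\<omega>. - t * f \<omega>) n) - ln (rsum t n)) / real n) \<longlonglongrightarrow> 0"
proof (rule LIMSEQ_I)
  fix e :: real assume e: "0 < e"
  define \<epsilon> where "\<epsilon> = e / (2 * (\<bar>t\<bar> + 1))"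
  have \<epsilon>: "0 < \<epsilon>" "\<bar>t\<bar> * \<epsilon> < e / 2"
    using e by (auto simp: \<epsilon>_def field_simps)
  obtain M where M: "\<forall>n. \<bar>ln (partition_sum (\<lambda>\<omega>. - t * f \<omega>) n) - ln (rsum t n)\<bar> \<le> \<bar>t\<bar> * (real n * \<epsilon> + M)"
    using abs_ln_partition_sum_rsum_le[OF \<epsilon>(1)] by blast
  obtain n0 where n0: "2 * (\<bar>t\<bar> * \<bar>M\<bar>) / e < real n0"
    using reals_Archimedean2 by blast
  have "norm ((ln (partition_sum (\<lambda>\<omega>. - t * f \<omega>) n) - ln (rsum t n)) / real n) < e"
    if n: "n \<ge> n0 + 1" for n
  proof -
    have n_pos: "0 < real n"
      using n by simp
    have "2 * (\<bar>t\<bar> * \<bar>M\<bar>) / e < real n"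
      using n0 n by linarith
    then have "\<bar>t\<bar> * \<bar>M\<bar> / real n < e / 2"
      using n e by (simp add: field_simps)
    moreover have "\<bar>t\<bar> * (real n * \<epsilon> + M) / real n = \<bar>t\<bar> * \<epsilon> + \<bar>t\<bar> * M / real n"
      using n_pos by (simp add: field_simps)
    moreover have "\<bar>t\<bar> * M / real n \<le> \<bar>t\<bar> * \<bar>M\<bar> / real n"
      using n_pos by (intro divide_right_mono mult_left_mono) auto
    moreover have "\<bar>ln (partition_sum (\<lambda>\<omega>. - t * f \<omega>) n) - ln (rsum t n)\<bar> / real n
        \<le> \<bar>t\<bar> * (real n * \<epsilon> + M) / real n"
      using M n_pos by (intro divide_right_mono) auto
    ultimately have "\<bar>ln (partition_sum (\<lambda>\<omega>. - t * f \<omega>) n) - ln (rsum t n)\<bar> / real n < e"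
      using \<epsilon>(2) by linarith
    then show ?thesis
      using n_pos by simp
  qed
  then show "\<exists>n0. \<forall>n\<ge>n0. norm ((ln (partition_sum (\<lambda>\<omega>. - t * f \<omega>) n) - ln (rsum t n)) / real n - 0) < e"
    by auto
qed

lemma ratio_r_le_R_pow:
  assumes "I \<in> words_len T n"
  shows "0 < r I / r []" "r I / r [] \<le> R ^ n"
proof -
  have I: "I \<in> words T" "length I = n"
    using assms words_len_subset_words length_words_len by auto
  have r: "0 < r []" "0 < r I"
    using r_pos Nil_in_words I(1) by auto
  then show "0 < r I / r []"
    by simp
  show "r I / r [] \<le> R ^ n"
    using r_bounds[OF I(1)] I(2) r(1) by (simp add: divide_le_eq)
qed

lemma rsum_pos: "0 < rsum t n"
  unfolding rsum_def
proof (intro sum_pos finite_words_len words_len_nonempty)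
  fix I assume "I \<in> words_len T n"
  then show "0 < (r I / r []) powr t"
    using ratio_r_le_R_pow(1)[of I n] by (metis powr_gt_zero less_irrefl)
qed

lemma R_pow_powr: "(R ^ n) powr a = exp (a * real n * ln R)"
  using R_pos by (simp add: powr_def ln_realpow mult.assoc)

lemma rsum_le:
  assumes "s \<le> t"
  shows "rsum t n \<le> exp ((t - s) * real n * ln R) * rsum s n"
  unfolding rsum_def sum_distrib_left R_pow_powr[symmetric]
proof (rule sum_mono)
  fix I assume I: "I \<in> words_len T n"
  have "(r I / r []) powr t = (r I / r []) powr (t - s) * (r I / r []) powr s"
    by (simp flip: powr_add)
  also have "\<dots> \<le> (R ^ n) powr (t - s) * (r I / r []) powr s"
    using ratio_r_le_R_pow[OF I] assms by (intro mult_right_mono powr_mono2) auto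
  finally show "(r I / r []) powr t \<le> (R ^ n) powr (t - s) * (r I / r []) powr s" .
qed

lemma rsum_ge:
  assumes "t \<le> s"
  shows "exp ((t - s) * real n * ln R) * rsum s n \<le> rsum t n"
  unfolding rsum_def sum_distrib_left R_pow_powr[symmetric]
proof (rule sum_mono)
  fix I assume I: "I \<in> words_len T n"
  have "(R ^ n) powr (t - s) * (r I / r []) powr s \<le> (r I / r []) powr (t - s) * (r I / r []) powr s"
    using ratio_r_le_R_pow[OF I] assms by (intro mult_right_mono powr_mono2') auto
  also have "\<dots> = (r I / r []) powr t"
    by (simp flip: powr_add)
  finally show "(R ^ n) powr (t - s) * (r I / r []) powr s \<le> (r I / r []) powr t" .
qed

lemma rsum_eq_sum_div: "rsum t n = (\<Sum>I\<in>words_len T n. r I powr t) / r [] powr t"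
  unfolding rsum_def sum_divide_distrib
  using r_pos Nil_in_words words_len_subset_words by (intro sum.cong) (auto simp: powr_divide less_imp_le)

lemma pressure_tendsto:
  "(\<lambda>n. ln (partition_sum (\<lambda>\<omega>. - t * f \<omega>) n) / real n) \<longlonglongrightarrow> pressure T (\<lambda>\<omega>. - t * f \<omega>)"
proof -
  obtain B where B: "\<forall>\<omega>\<in>T. \<bar>f \<omega>\<bar> \<le> B"
    using f_bounded by blast
  then have "\<forall>\<omega>\<in>T. \<bar>- t * f \<omega>\<bar> \<le> \<bar>t\<bar> * B"
    by (simp add: abs_mult mult_left_mono)
  then show ?thesis
    unfolding pressure_eq_lim convergent_LIMSEQ_iff[symmetric] by (rule pressure_convergent)
qed

lemma pressure_le:
  assumes "s \<le> t" and E: "\<forall>n. rsum s n \<le> E"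
  shows "pressure T (\<lambda>\<omega>. - t * f \<omega>) \<le> (t - s) * ln R"
proof (rule lim_le_of_le_plus_null[OF pressure_tendsto ln_partition_sum_rsum_null])
  fix n :: nat assume n: "n \<ge> 1"
  have "ln (rsum t n) \<le> ln (exp ((t - s) * real n * ln R) * rsum s n)"
    using rsum_le[OF assms(1)] rsum_pos by (subst ln_le_cancel_iff) auto
  also have "\<dots> = (t - s) * real n * ln R + ln (rsum s n)"
    using rsum_pos[of s n] by (simp add: ln_mult)
  also have "\<dots> \<le> (t - s) * real n * ln R + ln E"
    using E rsum_pos[of s n] by (simp add: ln_le_cancel_iff order_less_le_trans)
  finally have "ln (rsum t n) / real n \<le> ((t - s) * real n * ln R + ln E) / real n"
    by (rule divide_right_mono) simp
  then show "ln (partition_sum (\<lambda>\<omega>. - t * f \<omega>) n) / real n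
     - (ln (partition_sum (\<lambda>\<omega>. - t * f \<omega>) n) - ln (rsum t n)) / real n
     \<le> (t - s) * ln R + ln E / real n"
    using n by (simp add: diff_divide_distrib add_divide_distrib)
qed

lemma pressure_ge:
  assumes "t \<le> s" and c: "0 < c" "\<forall>n. c \<le> rsum s n"
  shows "(t - s) * ln R \<le> pressure T (\<lambda>\<omega>. - t * f \<omega>)"
proof (rule lim_ge_of_ge_plus_null[OF pressure_tendsto ln_partition_sum_rsum_null])
  fix n :: nat assume n: "n \<ge> 1"
  have "(t - s) * real n * ln R + ln c \<le> ln (exp ((t - s) * real n * ln R) * rsum s n)"
    using c rsum_pos[of s n] by (simp add: ln_mult)
  also have "\<dots> \<le> ln (rsum t n)"
    using rsum_ge[OF assms(1)] rsum_pos by (subst ln_le_cancel_iff) auto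
  finally have "((t - s) * real n * ln R + ln c) / real n \<le> ln (rsum t n) / real n"
    by (rule divide_right_mono) simp
  then show "(t - s) * ln R - (- ln c) / real n
     \<le> ln (partition_sum (\<lambda>\<omega>. - t * f \<omega>) n) / real n
       - (ln (partition_sum (\<lambda>\<omega>. - t * f \<omega>) n) - ln (rsum t n)) / real n"
    using n by (simp add: diff_divide_distrib add_divide_distrib)
qed

theorem pressure_eq_0_iff:
  assumes "0 < c" "\<forall>n. c \<le> rsum s n \<and> rsum s n \<le> E"
  shows "pressure T (\<lambda>\<omega>. - t * f \<omega>) = 0 \<longleftrightarrow> t = s"
proof -
  have ln_R: "ln R < 0"
    using R_pos R_less_1 by simp
  consider "t < s" | "t = s" | "s < t"
    by linarith
  then show ?thesis
  proof cases
    case 1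
    with pressure_ge[of t s c] assms ln_R show ?thesis
      by (smt (verit) mult_neg_neg)
  next
    case 2
    with pressure_ge[of t s c] pressure_le[of s t E] assms show ?thesis
      by force
  next
    case 3
    with pressure_le[of s t E] assms ln_R show ?thesis
      by (smt (verit) mult_pos_neg)
  qed
qed

end

lemma (in shift_space) ratio_defect_uniform_of_holder:
  assumes r_pos: "\<forall>I\<in>words T. 0 < r I"
    and holder: "holder_on (T \<union> emb N ` words T) g"
    and g_words: "\<forall>I\<in>words T. g (emb N I) = fword \<kappa> r I"
    and g_T: "\<forall>\<omega>\<in>T. g \<omega> = f \<omega>"
    and \<kappa>_to_1: "\<forall>e>0. \<exists>m. \<forall>I J. I @ J \<in> words T \<and> length J \<ge> m \<longrightarrow> \<bar>kapW \<kappa> I J - 1\<bar> < e"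
    and \<epsilon>: "0 < \<epsilon>"
  shows "\<exists>L. \<forall>\<omega>\<in>T. \<forall>j\<ge>L. \<bar>ln (r (pref \<omega> (Suc j))) - ln (r (pref (shift \<omega>) j)) + f \<omega>\<bar> \<le> \<epsilon>"
proof -
  obtain a C where a: "0 < a" "a < 1" and var: "\<forall>n. \<forall>\<omega>\<in>T \<union> emb N ` words T. \<forall>\<tau>\<in>T \<union> emb N ` words T.
      (\<forall>k<n. \<omega> k = \<tau> k) \<longrightarrow> \<bar>g \<omega> - g \<tau>\<bar> \<le> C * a ^ n"
    using holder unfolding holder_on_def by blast
  have "(\<lambda>n. C * a ^ n) \<longlonglongrightarrow> C * 0"
    using a by (intro tendsto_mult tendsto_const LIMSEQ_power_zero) auto
  then obtain L where L: "\<forall>n\<ge>L. C * a ^ n < \<epsilon> / 2"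
    using \<epsilon> order_tendstoD(2)[of _ 0 sequentially "\<epsilon> / 2"] by (auto simp: eventually_sequentially)
  have "isCont ln (1 :: real)"
    by (simp add: isCont_ln)
  then obtain \<delta> where \<delta>: "0 < \<delta>" "\<forall>x::real. dist x 1 < \<delta> \<longrightarrow> dist (ln x) (ln 1) < \<epsilon> / 2"
    using half_gt_zero[OF \<epsilon>] unfolding continuous_at_eps_delta by blast
  have "0 < min \<delta> 1"
    using \<delta>(1) by simp
  then obtain m where m: "\<forall>I J. I @ J \<in> words T \<and> length J \<ge> m \<longrightarrow> \<bar>kapW \<kappa> I J - 1\<bar> < min \<delta> 1"
    using \<kappa>_to_1 by blast
  have "\<bar>ln (r (pref \<omega> (Suc j))) - ln (r (pref (shift \<omega>) j)) + f \<omega>\<bar> \<le> \<epsilon>"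
    if \<omega>: "\<omega> \<in> T" and j: "max L m \<le> j" for \<omega> j
  proof -
    define i J where "i = \<omega> 0" and "J = pref (shift \<omega>) j"
    have iJ: "pref \<omega> (Suc j) = i # J"
      by (simp add: i_def J_def pref_Suc)
    have words: "i # J \<in> words T" "J \<in> words T"
      using pref_in_words[OF \<omega>, of "Suc j"] pref_in_words[OF shift_in[OF \<omega>]] by (simp_all add: iJ J_def)
    have "\<bar>kapW \<kappa> [i] J - 1\<bar> < min \<delta> 1"
      using m words(1) j by (simp add: J_def)
    moreover have "kapW \<kappa> [i] J = \<kappa> i J"
      by (simp add: kapW_def)
    ultimately have "\<bar>\<kappa> i J - 1\<bar> < min \<delta> 1"
      by simp
    then have \<kappa>_pos: "0 < \<kappa> i J" and ln_\<kappa>: "\<bar>ln (\<kappa> i J)\<bar> < \<epsilon> / 2"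
      using \<delta>(2) by (auto simp: dist_real_def)
    have "fword \<kappa> r (i # J) = ln (r J) - ln (r (i # J)) - ln (\<kappa> i J)"
    proof -
      have "0 < r J" "0 < r (i # J)"
        using r_pos words by auto
      then show ?thesis
        using \<kappa>_pos by (simp add: fword_def ln_div ln_mult)
    qed
    then have "ln (r (i # J)) - ln (r J) + f \<omega> = (g \<omega> - g (emb N (i # J))) - ln (\<kappa> i J)"
      using g_words g_T words(1) \<omega> by simp
    moreover have "\<bar>g \<omega> - g (emb N (pref \<omega> (Suc j)))\<bar> \<le> C * a ^ Suc j"
    proof (rule var[rule_format])
      show "\<omega> \<in> T \<union> emb N ` words T" "emb N (pref \<omega> (Suc j)) \<in> T \<union> emb N ` words T"
        using \<omega> pref_in_words[OF \<omega>] by blast+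
      show "\<omega> k = emb N (pref \<omega> (Suc j)) k" if "k < Suc j" for k
        using that by (simp add: emb_pref_agree)
    qed
    moreover have "C * a ^ Suc j < \<epsilon> / 2"
      using L j by (simp del: power_Suc)
    ultimately show ?thesis
      using ln_\<kappa> abs_triangle_ineq4[of "g \<omega> - g (emb N (i # J))" "ln (\<kappa> i J)"]
      unfolding iJ J_def by linarith
  qed
  then show ?thesis
    by blast
qed

lemma mpow_Suc_pos_imp:
  assumes "0 < mpow N A (Suc k) i j"
  obtains l where "l < N" "0 < mpow N A k i l" "0 < A l j"
proof -
  have "0 < (\<Sum>l<N. mpow N A k i l * A l j)"
    using assms by simp
  then obtain l where "l < N" "mpow N A k i l * A l j \<noteq> 0"
    by (metis (mono_tags) lessThan_iff less_irrefl sum.neutral)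
  then show ?thesis
    using that by simp
qed

lemma mpow_pos_imp_successor: "0 < mpow N A (Suc k) i j \<Longrightarrow> j < N \<Longrightarrow> \<exists>l<N. 0 < A i l"
proof (induction k arbitrary: j)
  case 0
  obtain l where "l < N" "0 < mpow N A 0 i l" "0 < A l j"
    using "0.prems"(1) by (rule mpow_Suc_pos_imp)
  then have "0 < A i j"
    by (simp split: if_splits)
  then show ?case
    using "0.prems"(2) by blast
next
  case (Suc k)
  obtain l where "l < N" "0 < mpow N A (Suc k) i l" "0 < A l j"
    using Suc.prems(1) by (rule mpow_Suc_pos_imp)
  then show ?case
    using Suc.IH by blast
qed

lemma subshift_nonempty:
  assumes "0 < N" and A01: "\<forall>i<N. \<forall>j<N. A i j \<in> {0, 1}" and irr: "irreducible_mat N A"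
  shows "{\<omega> \<in> Sigma_N N. \<forall>n. A (\<omega> n) (\<omega> (Suc n)) = 1} \<noteq> {}"
proof -
  have successor: "\<exists>l<N. A i l = 1" if i: "i < N" for i
  proof -
    obtain k where k: "0 < k" "0 < mpow N A k i 0"
      using irr i assms(1) unfolding irreducible_mat_def by blast
    then obtain k' where "k = Suc k'"
      using gr0_conv_Suc by blast
    then obtain l where "l < N" "0 < A i l"
      using mpow_pos_imp_successor[of N A k' i 0] k(2) assms(1) by blast
    then show ?thesis
      using A01 i by fastforce
  qed
  define next_state where "next_state i = (SOME l. l < N \<and> A i l = 1)" for i
  have next_state: "next_state i < N \<and> A i (next_state i) = 1" if "i < N" for i
    unfolding next_state_def using someI_ex[OF successor[OF that]] .
  define \<omega> where "\<omega> n = (next_state ^^ n) 0" for n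
  have "\<omega> n < N" for n
    unfolding \<omega>_def by (induction n) (simp_all add: assms(1) next_state)
  then have "\<omega> \<in> {\<omega> \<in> Sigma_N N. \<forall>n. A (\<omega> n) (\<omega> (Suc n)) = 1}"
    using next_state unfolding Sigma_N_def \<omega>_def by simp
  then show ?thesis
    by blast
qed

theorem mainTheorem9:
  fixes N :: nat and T :: "seq set" and A :: "nat \<Rightarrow> nat \<Rightarrow> nat"
    and x :: "word \<Rightarrow> 'a::complete_space" and r :: "word \<Rightarrow> real"
    and s \<rho>0 C D E G R W \<delta>0 \<xi> :: real
    and \<phi> :: "nat \<Rightarrow> 'a \<Rightarrow> 'a" and \<rho> :: "seq \<Rightarrow> real"
  defines "K \<equiv> Kset T x []"
  defines "kp \<equiv> kap_plus \<phi> r (nbhd K (G * \<xi>))"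
  defines "km \<equiv> kap_minus \<phi> r (nbhd K (G * \<xi>))"
  defines "f \<equiv> (\<lambda>\<omega>. ln (1 / \<rho> \<omega>))"
  assumes N2: "N \<ge> 2"
    and doubl: "doubling (UNIV :: 'a set)"
    and G0: "G \<ge> 0"
    and rpos: "\<forall>I\<in>words T. r I > 0"
    and cpos: "\<rho>0 > 0" "C > 0" "D > 0" "E > 0"
    and T1: "\<forall>I\<in>words T. \<forall>J\<in>words T. \<not> prefix I J \<and> \<not> prefix J I
               \<longrightarrow> dist (x I) (x J) \<ge> C * (r I + r J)"
    and T2: "\<forall>I\<in>words T. \<forall>J J'. I @ J \<in> words T \<and> I @ J' \<in> words T
               \<longrightarrow> dist (x (I @ J)) (x (I @ J')) \<le> D * r I"
    and T'3: "\<forall>I\<in>words T. \<forall>n. \<forall>\<I>. \<I> \<subseteq> (\<Union>k\<in>{n..}. words_len T k)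
               \<and> (\<forall>\<omega>\<in>T. \<exists>!J. J \<in> \<I> \<and> pref \<omega> (length J) = J)
               \<and> (\<exists>J\<in>\<I>. prefix I J)
               \<longrightarrow> r I powr s / E \<le> (\<Sum>K\<in>{K\<in>\<I>. prefix I K}. r K powr s)
                 \<and> (\<Sum>K\<in>{K\<in>\<I>. prefix I K}. r K powr s) \<le> E * r I powr s"
    and T4: "\<forall>e>0. \<exists>m. \<forall>I\<in>words T. length I \<ge> m \<longrightarrow> r I < e"
    and T5: "\<forall>I j. I @ [j] \<in> words T \<longrightarrow> r (I @ [j]) \<ge> \<rho>0 * r I"
    and M1: "\<forall>i<N. \<forall>j<N. A i j \<in> {0, 1}" "irreducible_mat N A" "aperiodic_mat N A"
            "T = {\<omega> \<in> Sigma_N N. \<forall>n. A (\<omega> n) (\<omega> (Suc n)) = 1}"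
    and M2: "x ` words T \<subseteq> K"
    and M3: "0 < R" "R < 1" "\<forall>I i. I @ [i] \<in> words T \<longrightarrow> r (I @ [i]) \<le> R * r I"
    and M4: "\<forall>i<N. bilipschitz (\<phi> i)" "W > 0" "\<delta>0 > 0"
            "\<forall>I J. I @ J \<in> words T \<longrightarrow> phiw \<phi> I ` Kset T x J = Kset T x (I @ J)"
            "\<forall>I\<in>words T. \<forall>\<delta>. 0 < \<delta> \<and> \<delta> \<le> \<delta>0 \<longrightarrow>
               nbhd (Kset T x I) (r I * W * G * \<delta>) \<subseteq> phiw \<phi> I ` nbhd K (G * \<delta>)"
    and M5: "0 < \<xi>" "\<xi> < \<delta>0"
            "\<forall>e>0. \<exists>m. \<forall>I J. I @ J \<in> words T \<and> length J \<ge> m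
               \<longrightarrow> \<bar>kapW kp I J - 1\<bar> < e \<and> \<bar>kapW km I J - 1\<bar> < e"
    and M6: "\<forall>i \<omega>. seqcons i \<omega> \<in> T \<longrightarrow>
               (\<lambda>n. r (i # pref \<omega> n) / r (pref \<omega> n)) \<longlonglongrightarrow> \<rho> (seqcons i \<omega>)
               \<and> 0 < \<rho> (seqcons i \<omega>) \<and> \<rho> (seqcons i \<omega>) < 1"
            "cont_T T \<rho>"
            "\<exists>g1 g2. holder_on (T \<union> emb N ` words T) g1 \<and> holder_on (T \<union> emb N ` words T) g2
               \<and> (\<forall>I\<in>words T. g1 (emb N I) = fword kp r I \<and> g2 (emb N I) = fword km r I)
               \<and> (\<forall>\<omega>\<in>T. g1 \<omega> = f \<omega> \<and> g2 \<omega> = f \<omega>)"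
    and M7: "\<not> lattice_fun T f"
  shows "pressure T (\<lambda>\<omega>. - s * f \<omega>) = 0
         \<and> (\<forall>t. pressure T (\<lambda>\<omega>. - t * f \<omega>) = 0 \<longrightarrow> t = s)"
proof -
  have shift_in: "shift \<omega> \<in> T" if "\<omega> \<in> T" for \<omega>
    using that unfolding M1(4) by (simp add: Sigma_N_def shift_def)
  have "T \<noteq> {}"
    unfolding M1(4) using subshift_nonempty[OF _ M1(1,2)] N2 by simp
  then interpret shift_space T N
    using shift_in unfolding M1(4) by unfold_locales auto
  obtain g where g: "holder_on (T \<union> emb N ` words T) g" "\<forall>I\<in>words T. g (emb N I) = fword kp r I"
    "\<forall>\<omega>\<in>T. g \<omega> = f \<omega>"
    using M6(3) by blast
  have kp_to_1: "\<forall>e>0. \<exists>m. \<forall>I J. I @ J \<in> words T \<and> length J \<ge> m \<longrightarrow> \<bar>kapW kp I J - 1\<bar> < e"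
    using M5(3) by blast
  interpret contracting_tree T N r \<rho>0 R f
    using ratio_defect_uniform_of_holder[OF rpos g kp_to_1] rpos T5 M3 cpos(1) by unfold_locales auto
  have "1 / E \<le> rsum s n \<and> rsum s n \<le> E" for n
  proof -
    have "words_len T n \<subseteq> (\<Union>k\<in>{n..}. words_len T k)" "\<forall>\<omega>\<in>T. \<exists>!J. J \<in> words_len T n \<and> pref \<omega> (length J) = J"
      "\<exists>J\<in>words_len T n. prefix [] J"
      using unique_pref_in_words_len words_len_nonempty[of n] by auto
    then have "r [] powr s / E \<le> (\<Sum>I\<in>words_len T n. r I powr s) \<and> (\<Sum>I\<in>words_len T n. r I powr s) \<le> E * r [] powr s"
      using T'3[rule_format, OF Nil_in_words, of "words_len T n" n] by simp
    moreover have "0 < r [] powr s"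
      using r_pos[OF Nil_in_words] by simp
    ultimately show ?thesis
      using cpos(4) by (simp add: rsum_eq_sum_div field_simps)
  qed
  then show ?thesis
    using pressure_eq_0_iff[of "1 / E" s E] cpos(4) by auto
qed

end
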